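(* For every integer $k\ge1$, the series $G_k(x)=1+\sum_{n\ge0}\big|\mathcal A_{n}^{(k)}\big|x^{n+1}$ satisfies $$G_k(x)=-\frac{U_{k-2}(x/2)+(-1)^kU_{k-3}(x/2)}{U_k(x/2)+(-1)^kU_{k-1}(x/2)}.$$
   Context: For integers $n\ge0$ and $k\ge1$, $\mathcal A_n^{(k)}$ is the set of all integer sequences $(a_1,\dots,a_n)$ with $1\le a_i\le k$ and $a_1\le a_2\ge a_3\le a_4\ge\cdots$ (i.e. $a_{2j-1}\le a_{2j}$ and $a_{2j}\ge a_{2j+1}$ whenever defined); $\mathcal A_0^{(k)}$ consists of the empty sequence. $U_n$ is the Chebyshev polynomial of the second kind, defined for all integers $n$ by $U_0=1$, $U_1(x)=2x$ and $U_{n+1}(x)=2xU_n(x)-U_{n-1}(x)$ (so $U_{-1}=0$, $U_{-2}=-1$). *)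

theory Defs
  imports "HOL-Computational_Algebra.Formal_Power_Series"
begin

text \<open>A sequence is a list; list index i (0-based)
  corresponds to a_(i+1), so for even i we need a!i <= a!(i+1), for odd i a!i >= a!(i+1).\<close>
definition alt_seqs :: "nat \<Rightarrow> nat \<Rightarrow> int list set" where
  "alt_seqs n k = {a. length a = n \<and> (\<forall>i<n. 1 \<le> a!i \<and> a!i \<le> int k) \<and>
     (\<forall>i. i + 1 < n \<longrightarrow> (if even i then a!i \<le> a!(i+1) else a!i \<ge> a!(i+1)))}"

fun chebU_nat :: "nat \<Rightarrow> 'a::comm_ring_1 \<Rightarrow> 'a" where
  "chebU_nat 0 x = 1"
| "chebU_nat (Suc 0) x = 2 * x"
| "chebU_nat (Suc (Suc n)) x = 2 * x * chebU_nat (Suc n) x - chebU_nat n x"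

text \<open>Extension to all integers via the same recurrence: U_(-1) = 0 and U_(-n-2) = - U_n.\<close>
definition chebU :: "int \<Rightarrow> 'a::comm_ring_1 \<Rightarrow> 'a" where
  "chebU n x = (if n \<ge> 0 then chebU_nat (nat n) x
                else if n = -1 then 0 else - chebU_nat (nat (-n-2)) x)"

definition G :: "nat \<Rightarrow> real fps" where
  "G k = Abs_fps (\<lambda>m. if m = 0 then 1 else real (card (alt_seqs (m - 1) k)))"

end

theory Submission
  imports Defs
begin

text \<open>Let P_j and Q_j be the generating functions of the sequences of odd and of even length
  ending in j. Appending one entry gives Q_j = X (P_1 + ... + P_j) and P_j = X + X (Q_j + ... + Q_k),
  so P_{j+1} = P_j - X Q_j and Q_{j+1} = Q_j + X P_{j+1}: up to the signs (-1)^j, the sequence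
  P_1, Q_1, P_2, Q_2, ... obeys the recurrence of U_n(X/2), whence P_{j+1} = (-1)^j P_1 U_{2j} and
  Q_{j+1} = (-1)^j P_1 U_{2j+1}. The boundary equation P_k = X + X Q_k then gives
  (-1)^k P_1 U_{2k} = X, and G_k = 1 + P_1 + Q_k. With s = (-1)^k, the addition formula
  U_{m+n} = U_m U_n - U_{m-1} U_{n-1} factors both U_{2k} and X - s U_{2k-2} through
  U_k - s U_{k-1}, and cancelling that factor leaves the closed form.\<close>

lemma chebU_of_nat: "chebU (int n) x = chebU_nat n x"
  by (simp add: chebU_def)

lemma chebU_0 [simp]: "chebU 0 x = 1"
  and chebU_1 [simp]: "chebU 1 x = 2 * x"
  and chebU_minus1 [simp]: "chebU (- 1) x = 0"
  by (simp_all add: chebU_def)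

lemma chebU_reflect: "chebU (- n - 2) x = - chebU n x"
  by (simp add: chebU_def)

lemma chebU_rec: "chebU (n + 1) x = 2 * x * chebU n x - chebU (n - 1) x"
proof -
  have nonneg: "chebU (int m + 1) x = 2 * x * chebU (int m) x - chebU (int m - 1) x" for m
  proof (cases m)
    case (Suc l)
    have "int (Suc l) + 1 = int (Suc (Suc l))" "int (Suc l) - 1 = int l" by simp_all
    then show ?thesis unfolding Suc by (simp only: chebU_of_nat chebU_nat.simps)
  qed (simp add: chebU_def)
  consider "n \<ge> 0" | "n = - 1" | "n \<le> - 2" by linarith
  then show ?thesis
  proof cases
    case 1
    then show ?thesis using nonneg[of "nat n"] by simp
  next
    case 2
    then show ?thesis by (simp add: chebU_def)
  next
    case 3
    define m where "m = nat (- n - 2)"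
    have n: "n = - int m - 2" using 3 by (simp add: m_def)
    have "chebU (n + 1) x = - chebU (int m - 1) x"
      unfolding n using chebU_reflect[of "int m - 1" x] by (simp add: algebra_simps)
    moreover have "chebU n x = - chebU (int m) x"
      unfolding n by (rule chebU_reflect)
    moreover have "chebU (n - 1) x = - chebU (int m + 1) x"
      unfolding n using chebU_reflect[of "int m + 1" x] by (simp add: algebra_simps)
    ultimately show ?thesis using nonneg[of m] by (simp add: algebra_simps)
  qed
qed

lemma int_recurrence_unique:
  fixes f g :: "int \<Rightarrow> 'a::comm_ring_1"
  assumes f: "\<And>n. f (n + 1) = c * f n - f (n - 1)"
    and g: "\<And>n. g (n + 1) = c * g n - g (n - 1)"
    and "f 0 = g 0" "f 1 = g 1"
  shows "f n = g n"
proof -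
  have "f n = g n \<and> f (n + 1) = g (n + 1)"
  proof (induction n rule: int_induct[where k = 0])
    case base
    then show ?case using assms(3,4) by simp
  next
    case (step1 i)
    then show ?case using f[of "i + 1"] g[of "i + 1"] by simp
  next
    case (step2 i)
    have "f (i - 1) = c * f i - f (i + 1)" "g (i - 1) = c * g i - g (i + 1)"
      using f[of i] g[of i] by (simp_all add: algebra_simps)
    with step2 show ?case by simp
  qed
  then show ?thesis ..
qed

lemma chebU_add:
  "chebU (m + n) x = chebU m x * chebU n x - chebU (m - 1) x * chebU (n - 1) x"
proof (rule int_recurrence_unique[where c = "2 * x" and f = "\<lambda>n. chebU (m + n) x"
      and g = "\<lambda>n. chebU m x * chebU n x - chebU (m - 1) x * chebU (n - 1) x"])
  show "chebU (m + (n + 1)) x = 2 * x * chebU (m + n) x - chebU (m + (n - 1)) x" for n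
    using chebU_rec[of "m + n" x] by (simp add: algebra_simps)
next
  fix n
  have "chebU m x * chebU (n + 1) x - chebU (m - 1) x * chebU (n + 1 - 1) x
      = chebU m x * (2 * x * chebU n x - chebU (n - 1) x)
        - chebU (m - 1) x * (2 * x * chebU (n - 1) x - chebU (n - 1 - 1) x)"
    using chebU_rec[of n x] chebU_rec[of "n - 1" x] by simp
  also have "\<dots> = 2 * x * (chebU m x * chebU n x - chebU (m - 1) x * chebU (n - 1) x)
      - (chebU m x * chebU (n - 1) x - chebU (m - 1) x * chebU (n - 1 - 1) x)"
    by (simp add: algebra_simps)
  finally show "chebU m x * chebU (n + 1) x - chebU (m - 1) x * chebU (n + 1 - 1) x
      = 2 * x * (chebU m x * chebU n x - chebU (m - 1) x * chebU (n - 1) x)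
        - (chebU m x * chebU (n - 1) x - chebU (m - 1) x * chebU (n - 1 - 1) x)" .
qed (simp_all add: chebU_rec[of m x] mult.commute)

lemma chebU_cassini: "chebU n x ^ 2 - chebU (n - 1) x * chebU (n + 1) x = 1"
proof -
  have "- (n - 1) - 2 = - n - 1" by simp
  then have "chebU (- n - 1) x = - chebU (n - 1) x"
    using chebU_reflect[of "n - 1" x] by (simp only:)
  moreover have "n + 1 + (- n - 1) = 0" "n + 1 - 1 = n" "- n - 1 - 1 = - n - 2" by simp_all
  then have "chebU 0 x = chebU (n + 1) x * chebU (- n - 1) x - chebU n x * chebU (- n - 2) x"
    using chebU_add[of "n + 1" "- n - 1" x] by (simp only:)
  ultimately have "1 = chebU (n + 1) x * - chebU (n - 1) x - chebU n x * - chebU n x"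
    by (simp only: chebU_reflect chebU_0)
  then show ?thesis by (simp add: power2_eq_square algebra_simps)
qed

lemma chebU_double_factor:
  fixes x s :: "'a::idom"
  assumes "s * s = 1"
  shows "chebU (2 * n) x = (chebU n x + s * chebU (n - 1) x) * (chebU n x - s * chebU (n - 1) x)"
proof -
  have "2 * n = n + n" by simp
  then have "chebU (2 * n) x = chebU n x * chebU n x - chebU (n - 1) x * chebU (n - 1) x"
    using chebU_add[of n n x] by (simp only:)
  with assms show ?thesis by algebra
qed

lemma chebU_double_pred_factor:
  fixes x s :: "'a::idom"
  assumes "s * s = 1"
  shows "2 * x - s * chebU (2 * n - 2) x
    = - s * (chebU (n - 2) x + s * chebU (n - 3) x) * (chebU n x - s * chebU (n - 1) x)"
proof -
  have "2 * n - 2 = (n - 1) + (n - 1)" "n - 1 - 1 = n - 2" "n - 2 - 1 = n - 3" "n - 2 + 1 = n - 1"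
    by simp_all
  then have "chebU (2 * n - 2) x = chebU (n - 1) x * chebU (n - 1) x - chebU (n - 2) x * chebU (n - 2) x"
    and "chebU (n - 2) x ^ 2 - chebU (n - 3) x * chebU (n - 1) x = 1"
    using chebU_add[of "n - 1" "n - 1" x] chebU_cassini[of "n - 2" x] by (simp_all only:)
  moreover have "chebU n x = 2 * x * chebU (n - 1) x - chebU (n - 2) x"
    using chebU_rec[of "n - 1" x] by simp
  moreover have "chebU (n - 1) x = 2 * x * chebU (n - 2) x - chebU (n - 3) x"
    using chebU_rec[of "n - 2" x] by simp
  ultimately show ?thesis using assms by algebra
qed

definition alt_seqs_ending :: "nat \<Rightarrow> nat \<Rightarrow> nat \<Rightarrow> int list set" where
  "alt_seqs_ending n k j = {a \<in> alt_seqs n k. a \<noteq> [] \<and> last a = int j}"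

lemma finite_alt_seqs: "finite (alt_seqs n k)"
proof (rule finite_subset)
  show "alt_seqs n k \<subseteq> {a. set a \<subseteq> {1..int k} \<and> length a = n}"
    by (auto simp: alt_seqs_def in_set_conv_nth)
qed (rule finite_lists_length_eq, simp)

lemma finite_alt_seqs_ending: "finite (alt_seqs_ending n k j)"
  using finite_alt_seqs by (simp add: alt_seqs_ending_def)

lemma last_alt_seqs_bounds:
  assumes "a \<in> alt_seqs n k" "a \<noteq> []"
  shows "1 \<le> last a \<and> last a \<le> int k"
  using assms by (auto simp: alt_seqs_def last_conv_nth)

lemma alt_seqs_ending_0 [simp]: "alt_seqs_ending n k 0 = {}"
  using last_alt_seqs_bounds by (fastforce simp: alt_seqs_ending_def)

lemma alt_seqs_ending_Nil [simp]: "alt_seqs_ending 0 k j = {}"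
  by (simp add: alt_seqs_ending_def alt_seqs_def)

lemma alt_seqs_ending_Suc_0: "alt_seqs_ending (Suc 0) k j = (if 1 \<le> j \<and> j \<le> k then {[int j]} else {})"
  by (auto simp: alt_seqs_ending_def alt_seqs_def length_Suc_conv)

lemma snoc_in_alt_seqs_iff:
  assumes "length b = Suc m"
  shows "b @ [v] \<in> alt_seqs (Suc (Suc m)) k \<longleftrightarrow>
    b \<in> alt_seqs (Suc m) k \<and> 1 \<le> v \<and> v \<le> int k \<and> (if even m then last b \<le> v else v \<le> last b)"
proof -
  have "last b = b ! m" using assms by (subst last_conv_nth) auto
  then show ?thesis
    using assms by (auto simp: alt_seqs_def All_less_Suc nth_append)
qed

lemma alt_seqs_ending_Suc_Suc:
  assumes "1 \<le> j" "j \<le> k"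
  shows "alt_seqs_ending (Suc (Suc m)) k j = (\<lambda>b. b @ [int j]) `
    (\<Union>i \<in> (if even m then {1..j} else {j..k}). alt_seqs_ending (Suc m) k i)"
    (is "_ = _ ` (\<Union>i \<in> ?I. _)")
proof (intro equalityI subsetI)
  fix a
  assume a: "a \<in> alt_seqs_ending (Suc (Suc m)) k j"
  then have "length a = Suc (Suc m)" "last a = int j"
    by (simp_all add: alt_seqs_ending_def alt_seqs_def)
  define b where "b = butlast a"
  have b: "a = b @ [int j]" "length b = Suc m"
    using \<open>length a = Suc (Suc m)\<close> \<open>last a = int j\<close> unfolding b_def
    by (metis append_butlast_last_id list.size(3) nat.distinct(1), simp)
  with a have b_alt: "b \<in> alt_seqs (Suc m) k" and b_last: "if even m then last b \<le> int j else int j \<le> last b"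
    using snoc_in_alt_seqs_iff[of b m "int j" k] by (auto simp: alt_seqs_ending_def)
  have "b \<noteq> []" using b(2) by auto
  define i where "i = nat (last b)"
  have i: "last b = int i" "1 \<le> i" "i \<le> k"
    using last_alt_seqs_bounds[OF b_alt \<open>b \<noteq> []\<close>] by (auto simp: i_def)
  then have "i \<in> ?I" using b_last assms by auto
  moreover have "b \<in> alt_seqs_ending (Suc m) k i"
    using b_alt i \<open>b \<noteq> []\<close> by (simp add: alt_seqs_ending_def)
  ultimately show "a \<in> (\<lambda>b. b @ [int j]) ` (\<Union>i \<in> ?I. alt_seqs_ending (Suc m) k i)"
    using b(1) by blast
next
  fix a
  assume "a \<in> (\<lambda>b. b @ [int j]) ` (\<Union>i \<in> ?I. alt_seqs_ending (Suc m) k i)"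
  then obtain b i where "a = b @ [int j]" "i \<in> ?I" "b \<in> alt_seqs_ending (Suc m) k i"
    by blast
  moreover have "length b = Suc m"
    using \<open>b \<in> alt_seqs_ending (Suc m) k i\<close> by (simp add: alt_seqs_ending_def alt_seqs_def)
  ultimately show "a \<in> alt_seqs_ending (Suc (Suc m)) k j"
    using snoc_in_alt_seqs_iff[of b m "int j" k] assms
    by (auto simp: alt_seqs_ending_def split: if_splits)
qed

lemma card_alt_seqs_ending_Suc_Suc:
  assumes "1 \<le> j" "j \<le> k"
  shows "card (alt_seqs_ending (Suc (Suc m)) k j) =
    (\<Sum>i \<in> (if even m then {1..j} else {j..k}). card (alt_seqs_ending (Suc m) k i))"
proof -
  have "card (alt_seqs_ending (Suc (Suc m)) k j) =
      card (\<Union>i \<in> (if even m then {1..j} else {j..k}). alt_seqs_ending (Suc m) k i)"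
    unfolding alt_seqs_ending_Suc_Suc[OF assms] by (rule card_image) (simp add: inj_on_def)
  also have "\<dots> = (\<Sum>i \<in> (if even m then {1..j} else {j..k}). card (alt_seqs_ending (Suc m) k i))"
    by (rule card_UN_disjoint) (use finite_alt_seqs_ending in \<open>auto simp: alt_seqs_ending_def\<close>)
  finally show ?thesis .
qed

lemma card_alt_seqs_Suc: "card (alt_seqs (Suc n) k) = (\<Sum>j = 1..k. card (alt_seqs_ending (Suc n) k j))"
proof -
  have "alt_seqs (Suc n) k = (\<Union>j \<in> {1..k}. alt_seqs_ending (Suc n) k j)"
  proof (intro equalityI subsetI)
    fix a
    assume a: "a \<in> alt_seqs (Suc n) k"
    then have "a \<noteq> []" by (auto simp: alt_seqs_def)
    with a show "a \<in> (\<Union>j \<in> {1..k}. alt_seqs_ending (Suc n) k j)"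
      using last_alt_seqs_bounds[OF a] unfolding alt_seqs_ending_def
      by (intro UN_I[of "nat (last a)"]) auto
  qed (auto simp: alt_seqs_ending_def)
  then show ?thesis
    by (simp only:) (rule card_UN_disjoint,
        use finite_alt_seqs_ending in \<open>auto simp: alt_seqs_ending_def\<close>)
qed

unbundle fps_syntax

definition odd_ending_gf :: "nat \<Rightarrow> nat \<Rightarrow> real fps" where
  "odd_ending_gf k j = Abs_fps (\<lambda>n. if odd n then real (card (alt_seqs_ending n k j)) else 0)"

definition even_ending_gf :: "nat \<Rightarrow> nat \<Rightarrow> real fps" where
  "even_ending_gf k j = Abs_fps (\<lambda>n. if even n then real (card (alt_seqs_ending n k j)) else 0)"

lemma even_ending_gf_eq:
  assumes "j \<le> k"
  shows "even_ending_gf k j = fps_X * (\<Sum>i = 1..j. odd_ending_gf k i)"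
proof (rule fps_ext)
  fix n
  consider "n = 0" | "n = 1" | m where "n = Suc (Suc m)" by (metis One_nat_def not0_implies_Suc)
  then show "even_ending_gf k j $ n = (fps_X * (\<Sum>i = 1..j. odd_ending_gf k i)) $ n"
  proof cases
    case 3
    then show ?thesis using assms
      by (cases "j = 0") (auto simp: even_ending_gf_def odd_ending_gf_def fps_sum_nth
          card_alt_seqs_ending_Suc_Suc)
  qed (simp_all add: even_ending_gf_def odd_ending_gf_def fps_sum_nth)
qed

lemma odd_ending_gf_eq:
  assumes "1 \<le> j" "j \<le> k"
  shows "odd_ending_gf k j = fps_X + fps_X * (\<Sum>i = j..k. even_ending_gf k i)"
proof (rule fps_ext)
  fix n
  consider "n = 0" | "n = 1" | m where "n = Suc (Suc m)" by (metis One_nat_def not0_implies_Suc)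
  then show "odd_ending_gf k j $ n = (fps_X + fps_X * (\<Sum>i = j..k. even_ending_gf k i)) $ n"
  proof cases
    case 2
    then show ?thesis using assms
      by (simp add: even_ending_gf_def odd_ending_gf_def fps_sum_nth alt_seqs_ending_Suc_0)
  next
    case 3
    then show ?thesis using assms
      by (auto simp: even_ending_gf_def odd_ending_gf_def fps_sum_nth card_alt_seqs_ending_Suc_Suc)
  qed (simp add: odd_ending_gf_def)
qed

lemma G_eq_sum_ending_gf: "G k = 1 + fps_X + fps_X * (\<Sum>j = 1..k. odd_ending_gf k j + even_ending_gf k j)"
proof (rule fps_ext)
  fix n
  consider "n = 0" | "n = 1" | m where "n = Suc (Suc m)" by (metis One_nat_def not0_implies_Suc)
  then show "G k $ n = (1 + fps_X + fps_X * (\<Sum>j = 1..k. odd_ending_gf k j + even_ending_gf k j)) $ n"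
  proof cases
    case 2
    have "alt_seqs 0 k = {[]}" by (auto simp: alt_seqs_def)
    with 2 show ?thesis by (simp add: G_def even_ending_gf_def odd_ending_gf_def fps_sum_nth)
  next
    case 3
    then show ?thesis
      by (cases "even m")
        (simp_all add: G_def even_ending_gf_def odd_ending_gf_def fps_sum_nth card_alt_seqs_Suc)
  qed (simp add: G_def)
qed

lemma odd_ending_gf_Suc:
  assumes "1 \<le> j" "j < k"
  shows "odd_ending_gf k (Suc j) = odd_ending_gf k j - fps_X * even_ending_gf k j"
  using assms by (simp add: odd_ending_gf_eq sum.atLeast_Suc_atMost algebra_simps)

lemma even_ending_gf_Suc:
  assumes "Suc j \<le> k"
  shows "even_ending_gf k (Suc j) = even_ending_gf k j + fps_X * odd_ending_gf k (Suc j)"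
  using assms by (simp add: even_ending_gf_eq algebra_simps)

lemma G_eq_ending_gf:
  assumes "1 \<le> k"
  shows "G k = 1 + odd_ending_gf k 1 + even_ending_gf k k"
proof -
  have "G k = 1 + fps_X + fps_X * (\<Sum>j = 1..k. even_ending_gf k j) + fps_X * (\<Sum>j = 1..k. odd_ending_gf k j)"
    by (simp add: G_eq_sum_ending_gf sum.distrib algebra_simps)
  also have "\<dots> = 1 + odd_ending_gf k 1 + even_ending_gf k k"
    using assms by (simp add: odd_ending_gf_eq even_ending_gf_eq)
  finally show ?thesis .
qed

abbreviation U_half_X :: "int \<Rightarrow> real fps" where
  "U_half_X n \<equiv> chebU n (fps_const (1 / 2) * fps_X)"

lemma double_half_fps_X: "2 * (fps_const (1 / 2) * fps_X) = (fps_X :: real fps)"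
proof -
  have "(2 :: real fps) * fps_const (1 / 2) = fps_const (2 * (1 / 2))"
    by (simp only: numeral_fps_const fps_const_mult)
  then show ?thesis by (simp flip: mult.assoc)
qed

lemma U_half_X_rec: "U_half_X (n + 1) = fps_X * U_half_X n - U_half_X (n - 1)"
  by (simp only: chebU_rec double_half_fps_X)

lemma ending_gf_chebU:
  assumes "j < k"
  shows "odd_ending_gf k (Suc j) = (-1) ^ j * odd_ending_gf k 1 * U_half_X (2 * int j)
    \<and> even_ending_gf k (Suc j) = (-1) ^ j * odd_ending_gf k 1 * U_half_X (2 * int j + 1)"
  using assms
proof (induction j)
  case 0
  then show ?case using even_ending_gf_Suc[of 0 k] by (simp add: even_ending_gf_eq double_half_fps_X)
next
  case (Suc j)
  let ?c = "(-1) ^ j * odd_ending_gf k 1"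
  have IH: "odd_ending_gf k (Suc j) = ?c * U_half_X (2 * int j)"
    "even_ending_gf k (Suc j) = ?c * U_half_X (2 * int j + 1)"
    using Suc by simp_all
  have "odd_ending_gf k (Suc (Suc j)) = ?c * (U_half_X (2 * int j) - fps_X * U_half_X (2 * int j + 1))"
    using odd_ending_gf_Suc[of "Suc j" k] Suc.prems IH by (simp add: algebra_simps)
  also have "\<dots> = - ?c * U_half_X (2 * int (Suc j))"
  proof -
    have "U_half_X (2 * int (Suc j)) = fps_X * U_half_X (2 * int j + 1) - U_half_X (2 * int j)"
      using U_half_X_rec[of "2 * int j + 1"] by (simp add: algebra_simps)
    then show ?thesis by (simp only:) (simp add: algebra_simps)
  qed
  finally have odd: "odd_ending_gf k (Suc (Suc j)) = - ?c * U_half_X (2 * int (Suc j))" .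
  have "even_ending_gf k (Suc (Suc j)) = ?c * (U_half_X (2 * int j + 1) - fps_X * U_half_X (2 * int (Suc j)))"
    using even_ending_gf_Suc[of "Suc j" k] Suc.prems IH odd by (simp add: algebra_simps)
  also have "\<dots> = - ?c * U_half_X (2 * int (Suc j) + 1)"
  proof -
    have "U_half_X (2 * int (Suc j) + 1) = fps_X * U_half_X (2 * int (Suc j)) - U_half_X (2 * int j + 1)"
      using U_half_X_rec[of "2 * int (Suc j)"] by (simp add: algebra_simps)
    then show ?thesis by (simp only:) (simp add: algebra_simps)
  qed
  finally show ?case using odd by simp
qed

lemma odd_ending_gf_1_mult_chebU:
  assumes "1 \<le> k"
  shows "(-1) ^ k * odd_ending_gf k 1 * U_half_X (2 * int k) = fps_X"
proof -
  obtain j where k: "k = Suc j" using assms by (cases k) auto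
  let ?c = "(-1) ^ j * odd_ending_gf k 1"
  have rec: "U_half_X (2 * int k) = fps_X * U_half_X (2 * int j + 1) - U_half_X (2 * int j)"
    using U_half_X_rec[of "2 * int j + 1"] k by (simp add: algebra_simps)
  have "fps_X = odd_ending_gf k k - fps_X * even_ending_gf k k"
    using odd_ending_gf_eq[of k k] assms by simp
  also have "\<dots> = ?c * (U_half_X (2 * int j) - fps_X * U_half_X (2 * int j + 1))"
    using ending_gf_chebU[of j k] k by (simp add: algebra_simps)
  also have "\<dots> = (-1) ^ k * odd_ending_gf k 1 * U_half_X (2 * int k)"
    unfolding rec using k by (simp add: algebra_simps)
  finally show ?thesis ..
qed

lemma G_mult_chebU:
  assumes "1 \<le> k"
  shows "G k * ((-1) ^ k * U_half_X (2 * int k)) = fps_X - (-1) ^ k * U_half_X (2 * int k - 2)"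
proof -
  obtain j where k: "k = Suc j" using assms by (cases k) auto
  let ?s = "(-1) ^ k :: real fps" and ?p = "odd_ending_gf k 1"
  have G: "G k = 1 + ?p - ?s * ?p * U_half_X (2 * int j + 1)"
    using G_eq_ending_gf[OF assms] ending_gf_chebU[of j k] k by simp
  have rec: "U_half_X (2 * int k) = fps_X * U_half_X (2 * int j + 1) - U_half_X (2 * int j)"
    using U_half_X_rec[of "2 * int j + 1"] k by (simp add: algebra_simps)
  have "G k * (?s * U_half_X (2 * int k))
      = ?s * U_half_X (2 * int k) + (1 - ?s * U_half_X (2 * int j + 1)) * (?s * ?p * U_half_X (2 * int k))"
    unfolding G by (simp add: algebra_simps)
  also have "\<dots> = ?s * U_half_X (2 * int k) + (1 - ?s * U_half_X (2 * int j + 1)) * fps_X"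
    using odd_ending_gf_1_mult_chebU[OF assms] by simp
  also have "\<dots> = fps_X - ?s * U_half_X (2 * int j)"
    unfolding rec by (simp add: algebra_simps)
  finally show ?thesis using k by simp
qed

theorem corollary11:
  fixes k :: nat
  assumes "k \<ge> 1"
  shows "G k = - (chebU (int k - 2) (fps_const (1/2) * fps_X) + (-1) ^ k * chebU (int k - 3) (fps_const (1/2) * fps_X))
                / (chebU (int k) (fps_const (1/2) * fps_X) + (-1) ^ k * chebU (int k - 1) (fps_const (1/2) * fps_X))"
proof -
  let ?s = "(-1) ^ k :: real fps"
  let ?D = "U_half_X (int k) + ?s * U_half_X (int k - 1)"
  let ?N = "U_half_X (int k - 2) + ?s * U_half_X (int k - 3)"
  let ?E = "U_half_X (int k) - ?s * U_half_X (int k - 1)"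
  have s: "?s * ?s = 1" by (simp flip: power_add)
  have "U_half_X (2 * int k) \<noteq> 0"
    using odd_ending_gf_1_mult_chebU[OF assms] by auto
  then have "?D \<noteq> 0" "?s * ?E \<noteq> 0"
    using chebU_double_factor[OF s, of "int k"] s by auto
  have "G k * ?D * (?s * ?E) = G k * (?s * U_half_X (2 * int k))"
    unfolding chebU_double_factor[OF s, of "int k"] by (simp add: algebra_simps)
  also have "\<dots> = fps_X - ?s * U_half_X (2 * int k - 2)"
    by (rule G_mult_chebU[OF assms])
  also have "\<dots> = - ?N * (?s * ?E)"
    using chebU_double_pred_factor[OF s, of "fps_const (1 / 2) * fps_X" "int k", unfolded double_half_fps_X]
    by (simp add: algebra_simps)
  finally have "G k * ?D = - ?N"
    using \<open>?s * ?E \<noteq> 0\<close> by simp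
  then have "G k = - ?N / ?D"
    using nonzero_mult_div_cancel_right[OF \<open>?D \<noteq> 0\<close>, of "G k"] by simp
  then show ?thesis by simp
qed

end
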